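(* Let $\beta,\kappa\ge0$ and let $\gamma$ be a simple loop in $E_N$ with $\partial\hat\partial\gamma\subseteq E_N$. Then $|\mathbb E_{N,\beta,\kappa}[W_\gamma]|\le e^{-|\gamma\setminus\gamma_c|\,\alpha_5(\beta,\kappa)}$.
   Context: $G=\mathbb Z_n$, $\rho$ faithful unitary one-dimensional. On $\mathbb Z^4$: $E_N,P_N$ oriented edges/plaquettes with vertices in $B_N=[-N,N]^4\cap\mathbb Z^4$; $\partial p$ oriented boundary edges; $\hat\partial e=\{p:e\in\partial p\}$. $\Sigma_{E_N}$: $\sigma:E_N\to G$, $\sigma_{-e}=-\sigma_e$, $(d\sigma)_p=\sum_{e\in\partial p}\sigma_e$; $\mu_{N,\beta,\kappa}(\sigma)\propto\exp(\beta\sum_p\rho((d\sigma)_p)+\kappa\sum_e\rho(\sigma_e))$. Simple loop: set $\gamma$ of oriented edges, $e\in\gamma\Rightarrow-e\notin\gamma$, orderable into an oriented loop; $W_\gamma=\rho(\sum_{e\in\gamma}\sigma_e)$; $\gamma_c$ is the set of $e\in\gamma$ sharing a plaquette with another edge of $\gamma\cup(-\gamma)$. With $\varphi_r(g)=e^{r(\mathrm{Re}\rho(g)-1)}$: $\alpha_5(\beta,\kappa)=\min_{g_1,\dots,g_6\in G}\Bigl(1-\Bigl|\frac{\sum_g\rho(g)(\prod_{k=1}^6\varphi_\beta(g+g_k)^2)\varphi_\kappa(g)^2}{\sum_g(\prod_{k=1}^6\varphi_\beta(g+g_k)^2)\varphi_\kappa(g)^2}\Bigr|\Bigr)$. *)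

theory Defs
  imports "HOL-Analysis.Analysis"
begin

text \<open>The group G = Z_n is represented by the integers {0..<n} with addition mod n.
 A faithful unitary one-dimensional representation is a map rho on {0..<n}.\<close>

definition faithful_unitary_char :: "int \<Rightarrow> (int \<Rightarrow> complex) \<Rightarrow> bool" where
  "faithful_unitary_char n \<rho> \<longleftrightarrow>
     (\<forall>a\<in>{0..<n}. \<forall>b\<in>{0..<n}. \<rho> ((a + b) mod n) = \<rho> a * \<rho> b) \<and>
     (\<forall>g\<in>{0..<n}. cmod (\<rho> g) = 1) \<and> inj_on \<rho> {0..<n}"

type_synonym vtx = "int ^ 4"
type_synonym edge = "vtx \<times> vtx"
type_synonym plaq = "vtx \<times> 4 \<times> 4"

definition unitv :: "4 \<Rightarrow> vtx" where
  "unitv i = (\<chi> j. if j = i then 1 else 0)"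

definition box :: "nat \<Rightarrow> vtx set" where
  "box N = {x. \<forall>k. \<bar>x $ k\<bar> \<le> int N}"

definition is_edge :: "edge \<Rightarrow> bool" where
  "is_edge e \<longleftrightarrow> (\<exists>i. snd e = fst e + unitv i \<or> fst e = snd e + unitv i)"

definition rev_edge :: "edge \<Rightarrow> edge" where
  "rev_edge e = (snd e, fst e)"

definition edges :: "nat \<Rightarrow> edge set" where
  "edges N = {e. is_edge e \<and> fst e \<in> box N \<and> snd e \<in> box N}"

text \<open>oriented plaquettes of Z^4: (x,i,j), i \<noteq> j, with corners x, x+e_i, x+e_i+e_j, x+e_j;
  (x,j,i) is the same plaquette with the opposite orientation\<close>
definition plaquettes :: "plaq set" where
  "plaquettes = {(x, i, j). i \<noteq> j}"

definition pbd :: "plaq \<Rightarrow> edge set" where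
  "pbd p = (case p of (x, i, j) \<Rightarrow>
     {(x, x + unitv i), (x + unitv i, x + unitv i + unitv j),
      (x + unitv i + unitv j, x + unitv j), (x + unitv j, x)})"

definition plaqs :: "nat \<Rightarrow> plaq set" where
  "plaqs N = {(x, i, j). i \<noteq> j \<and> x \<in> box N \<and> x + unitv i \<in> box N \<and>
                x + unitv j \<in> box N \<and> x + unitv i + unitv j \<in> box N}"

definition configs :: "int \<Rightarrow> nat \<Rightarrow> (edge \<Rightarrow> int) set" where
  "configs n N = {\<sigma>. (\<forall>e\<in>edges N. \<sigma> e \<in> {0..<n} \<and> \<sigma> (rev_edge e) = (- \<sigma> e) mod n) \<and>
                      (\<forall>e. e \<notin> edges N \<longrightarrow> \<sigma> e = 0)}"

definition dsig :: "int \<Rightarrow> (edge \<Rightarrow> int) \<Rightarrow> plaq \<Rightarrow> int" where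
  "dsig n \<sigma> p = (\<Sum>e\<in>pbd p. \<sigma> e) mod n"

text \<open>Unnormalised Gibbs weight. The exponent
  beta * sum_p rho((d sigma)_p) + kappa * sum_e rho(sigma_e) is real, since both sums run over
  both orientations; we take its real part explicitly.\<close>
definition gibbs_weight :: "int \<Rightarrow> (int \<Rightarrow> complex) \<Rightarrow> nat \<Rightarrow> real \<Rightarrow> real \<Rightarrow> (edge \<Rightarrow> int) \<Rightarrow> real" where
  "gibbs_weight n \<rho> N \<beta> \<kappa> \<sigma> =
     exp (Re (complex_of_real \<beta> * (\<Sum>p\<in>plaqs N. \<rho> (dsig n \<sigma> p)) +
              complex_of_real \<kappa> * (\<Sum>e\<in>edges N. \<rho> (\<sigma> e))))"

definition expect :: "int \<Rightarrow> (int \<Rightarrow> complex) \<Rightarrow> nat \<Rightarrow> real \<Rightarrow> real \<Rightarrow> ((edge \<Rightarrow> int) \<Rightarrow> complex) \<Rightarrow> complex" where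
  "expect n \<rho> N \<beta> \<kappa> f =
     (\<Sum>\<sigma>\<in>configs n N. f \<sigma> * complex_of_real (gibbs_weight n \<rho> N \<beta> \<kappa> \<sigma>)) /
     complex_of_real (\<Sum>\<sigma>\<in>configs n N. gibbs_weight n \<rho> N \<beta> \<kappa> \<sigma>)"

definition wilson_loop :: "int \<Rightarrow> (int \<Rightarrow> complex) \<Rightarrow> edge set \<Rightarrow> (edge \<Rightarrow> int) \<Rightarrow> complex" where
  "wilson_loop n \<rho> \<gamma> \<sigma> = \<rho> ((\<Sum>e\<in>\<gamma>. \<sigma> e) mod n)"

definition simple_loop :: "edge set \<Rightarrow> bool" where
  "simple_loop \<gamma> \<longleftrightarrow> (\<forall>e\<in>\<gamma>. is_edge e) \<and> (\<forall>e\<in>\<gamma>. rev_edge e \<notin> \<gamma>) \<and>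
     (\<exists>es. es \<noteq> [] \<and> distinct es \<and> set es = \<gamma> \<and>
        (\<forall>k<length es. snd (es ! k) = fst (es ! ((k + 1) mod length es))))"

definition cobd :: "edge set \<Rightarrow> plaq set" where
  "cobd \<gamma> = {p \<in> plaquettes. \<exists>e\<in>\<gamma>. e \<in> pbd p}"

definition bd_set :: "plaq set \<Rightarrow> edge set" where
  "bd_set P = (\<Union>p\<in>P. pbd p)"

definition gamma_c :: "edge set \<Rightarrow> edge set" where
  "gamma_c \<gamma> = {e \<in> \<gamma>. \<exists>p\<in>plaquettes. e \<in> pbd p \<and>
                   (\<exists>e'\<in>\<gamma> \<union> rev_edge ` \<gamma>. e' \<noteq> e \<and> e' \<in> pbd p)}"

definition phi :: "real \<Rightarrow> (int \<Rightarrow> complex) \<Rightarrow> int \<Rightarrow> real" where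
  "phi r \<rho> g = exp (r * (Re (\<rho> g) - 1))"

definition alpha5_weight :: "int \<Rightarrow> (int \<Rightarrow> complex) \<Rightarrow> real \<Rightarrow> real \<Rightarrow> int list \<Rightarrow> int \<Rightarrow> real" where
  "alpha5_weight n \<rho> \<beta> \<kappa> gs g =
     (\<Prod>k<6. (phi \<beta> \<rho> ((g + gs ! k) mod n))\<^sup>2) * (phi \<kappa> \<rho> g)\<^sup>2"

definition alpha5 :: "int \<Rightarrow> (int \<Rightarrow> complex) \<Rightarrow> real \<Rightarrow> real \<Rightarrow> real" where
  "alpha5 n \<rho> \<beta> \<kappa> = Min ((\<lambda>gs. 1 - cmod
      ((\<Sum>g\<in>{0..<n}. \<rho> g * complex_of_real (alpha5_weight n \<rho> \<beta> \<kappa> gs g)) /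
       complex_of_real (\<Sum>g\<in>{0..<n}. alpha5_weight n \<rho> \<beta> \<kappa> gs g)))
      ` {gs. length gs = 6 \<and> set gs \<subseteq> {0..<n}})"

end

theory Submission
  imports Defs
begin

text \<open>
  Split a configuration into its values on the free edges \<open>\<gamma> - gamma_c \<gamma>\<close> and the rest.
  A free edge shares no plaquette with another edge of the loop or of its reversal, so for fixed
  values elsewhere the Gibbs weight and the Wilson loop factorize over the free edges: the edge
  \<open>e\<close> carries \<open>\<rho> (h e)\<close> times the exponential of a local action that involves only the six
  plaquettes through \<open>e\<close> (each counted twice, once per orientation) and the edge term. The ratio of
  the resulting single-edge sums is one of the quantities minimized in \<open>alpha5\<close>, so its modulus
  is at most \<open>1 - alpha5\<close>, and the expectation is bounded by
  \<open>(1 - alpha5) ^ card free_edges \<le> exp (- card free_edges * alpha5)\<close>.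
\<close>

lemma rev_edge_rev_edge [simp]: "rev_edge (rev_edge e) = e"
  by (simp add: rev_edge_def)

lemma inj_rev_edge: "inj rev_edge"
  by (metis injI rev_edge_rev_edge)

lemma unitv_eq_iff [simp]: "unitv i = unitv j \<longleftrightarrow> i = j"
proof
  assume "unitv i = unitv j"
  then have "unitv i $ i = unitv j $ i" by simp
  then show "i = j" by (simp add: unitv_def split: if_splits)
qed simp

lemma unitv_neq_zero: "unitv i \<noteq> 0"
proof
  assume "unitv i = 0"
  then have "unitv i $ i = 0" by simp
  then show False by (simp add: unitv_def)
qed

lemma unitv_add_unitv_neq_zero: "unitv i + unitv j \<noteq> 0"
proof
  assume "unitv i + unitv j = 0"
  then have "(unitv i + unitv j) $ i = 0" by simp
  then show False by (simp add: unitv_def split: if_splits)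
qed

lemma is_edge_rev_edge [simp]: "is_edge (rev_edge e) \<longleftrightarrow> is_edge e"
  by (auto simp: is_edge_def rev_edge_def)

lemma rev_edge_neq: "is_edge e \<Longrightarrow> rev_edge e \<noteq> e"
  using unitv_neq_zero by (auto simp: is_edge_def rev_edge_def prod_eq_iff)

lemma rev_edge_in_image_iff: "e \<in> rev_edge ` A \<longleftrightarrow> rev_edge e \<in> A"
  by (metis imageE imageI rev_edge_rev_edge)

lemma rev_edge_in_edges_iff [simp]: "rev_edge e \<in> edges N \<longleftrightarrow> e \<in> edges N"
  using is_edge_rev_edge[of e] by (auto simp: edges_def rev_edge_def)

lemma rev_edge_image_subset_edges_iff [simp]: "rev_edge ` A \<subseteq> edges N \<longleftrightarrow> A \<subseteq> edges N"
  by auto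

lemma finite_box: "finite (box N)"
proof -
  have "vec_nth ` box N \<subseteq> PiE UNIV (\<lambda>_. {-int N..int N})"
    by (auto simp: box_def abs_le_iff) (metis minus_le_iff)
  then have "finite (vec_nth ` box N)"
    by (rule finite_subset) (simp add: finite_PiE)
  then show ?thesis
    by (rule finite_imageD) (simp add: inj_on_def vec_eq_iff)
qed

lemma finite_edges: "finite (edges N)"
  by (rule finite_subset[of _ "box N \<times> box N"]) (auto simp: edges_def finite_box)

lemma finite_plaqs: "finite (plaqs N)"
  by (rule finite_subset[of _ "box N \<times> UNIV \<times> UNIV"]) (auto simp: plaqs_def finite_box)

lemma finite_pbd: "finite (pbd p)"
  by (cases p) (simp add: pbd_def)

lemma plaqs_subset_plaquettes: "plaqs N \<subseteq> plaquettes"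
  by (auto simp: plaqs_def plaquettes_def)

lemma plaqs_iff: "p \<in> plaqs N \<longleftrightarrow> p \<in> plaquettes \<and> pbd p \<subseteq> edges N"
  by (cases p) (auto simp: plaquettes_def plaqs_def pbd_def edges_def is_edge_def)

definition plaq_reverse :: "plaq \<Rightarrow> plaq" where
  "plaq_reverse p = (case p of (x, i, j) \<Rightarrow> (x, j, i))"

lemma plaq_reverse_plaq_reverse [simp]: "plaq_reverse (plaq_reverse p) = p"
  by (cases p) (simp add: plaq_reverse_def)

lemma inj_plaq_reverse: "inj plaq_reverse"
  by (metis injI plaq_reverse_plaq_reverse)

lemma plaq_reverse_in_plaquettes_iff [simp]: "plaq_reverse p \<in> plaquettes \<longleftrightarrow> p \<in> plaquettes"
  by (cases p) (auto simp: plaq_reverse_def plaquettes_def)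

lemma pbd_plaq_reverse: "pbd (plaq_reverse p) = rev_edge ` pbd p"
  by (cases p) (auto simp: plaq_reverse_def pbd_def rev_edge_def add.commute add.left_commute)

definition plaqs_at :: "edge \<Rightarrow> plaq set" where
  "plaqs_at e = {p \<in> plaquettes. e \<in> pbd p}"

lemma plaqs_at_rev_edge: "plaqs_at (rev_edge e) = plaq_reverse ` plaqs_at e"
proof (rule set_eqI)
  fix p
  have "p \<in> plaqs_at (rev_edge e) \<longleftrightarrow> plaq_reverse p \<in> plaqs_at e"
    using rev_edge_in_image_iff[of e "pbd p"] by (simp add: plaqs_at_def pbd_plaq_reverse)
  also have "\<dots> \<longleftrightarrow> p \<in> plaq_reverse ` plaqs_at e"
    by (auto simp: image_iff) (metis plaq_reverse_plaq_reverse)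
  finally show "p \<in> plaqs_at (rev_edge e) \<longleftrightarrow> p \<in> plaq_reverse ` plaqs_at e" .
qed

lemma plaqs_at_unit_edge:
  "plaqs_at (x, x + unitv i) =
     (\<lambda>(j, b). if b then (x, i, j) else (x - unitv j, j, i)) ` ({j. j \<noteq> i} \<times> UNIV)"
  (is "_ = ?f ` _")
proof (rule set_eqI, rule iffI)
  fix p assume "p \<in> plaqs_at (x, x + unitv i)"
  then obtain y a b where p: "p = (y, a, b)" and ab: "a \<noteq> b"
    and "(x, x + unitv i) \<in> pbd (y, a, b)"
    unfolding plaqs_at_def plaquettes_def by auto
  then consider "x = y" "x + unitv i = y + unitv a"
    | "x = y + unitv a" "x + unitv i = y + unitv a + unitv b"
    | "x = y + unitv a + unitv b" "x + unitv i = y + unitv b"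
    | "x = y + unitv b" "x + unitv i = y"
    by (auto simp: pbd_def)
  then show "p \<in> ?f ` ({j. j \<noteq> i} \<times> UNIV)"
  proof cases
    case 1
    then show ?thesis using ab p by (auto intro!: image_eqI[where x = "(b, True)"])
  next
    case 2
    then have "b = i" "y = x - unitv a" by simp_all
    then show ?thesis using ab p by (auto intro!: image_eqI[where x = "(a, False)"])
  next
    case 3
    then have "y + unitv b + (unitv a + unitv i) = y + unitv b + 0"
      by (simp add: algebra_simps)
    then have "unitv a + unitv i = 0" by (simp only: add_left_cancel)
    then show ?thesis using unitv_add_unitv_neq_zero by blast
  next
    case 4
    then have "y + (unitv b + unitv i) = y + 0" by (simp add: algebra_simps)
    then have "unitv b + unitv i = 0" by (simp only: add_left_cancel)
    then show ?thesis using unitv_add_unitv_neq_zero by blast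
  qed
next
  fix p assume "p \<in> ?f ` ({j. j \<noteq> i} \<times> UNIV)"
  then obtain j b where "j \<noteq> i" and "p = (if b then (x, i, j) else (x - unitv j, j, i))"
    by auto
  then show "p \<in> plaqs_at (x, x + unitv i)"
    by (auto simp: plaqs_at_def plaquettes_def pbd_def)
qed

lemma card_plaqs_at_unit_edge: "card (plaqs_at (x, x + unitv i)) = 6"
proof -
  have "inj_on (\<lambda>(j, b). if b then (x, i, j) else (x - unitv j, j, i)) ({j. j \<noteq> i} \<times> UNIV)"
    by (auto simp: inj_on_def split: if_splits)
  moreover have "card {j :: 4. j \<noteq> i} = 3"
  proof -
    have "{j :: 4. j \<noteq> i} = UNIV - {i}" by auto
    then show ?thesis by (simp add: card_Diff_singleton)
  qed
  ultimately show ?thesis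
    by (simp add: plaqs_at_unit_edge card_image card_cartesian_product)
qed

lemma card_plaqs_at: "is_edge e \<Longrightarrow> card (plaqs_at e) = 6"
proof -
  assume "is_edge e"
  then obtain i where "e = (fst e, fst e + unitv i) \<or> rev_edge e = (snd e, snd e + unitv i)"
    by (auto simp: is_edge_def rev_edge_def prod_eq_iff)
  then show ?thesis
  proof
    assume "rev_edge e = (snd e, snd e + unitv i)"
    then have "card (plaq_reverse ` plaqs_at e) = 6"
      using card_plaqs_at_unit_edge plaqs_at_rev_edge by metis
    then show ?thesis
      by (simp add: card_image inj_on_subset[OF inj_plaq_reverse])
  qed (metis card_plaqs_at_unit_edge)
qed

lemma finite_plaqs_at: "is_edge e \<Longrightarrow> finite (plaqs_at e)"
  using card_plaqs_at by (metis card.infinite zero_neq_numeral)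

locale zn_character =
  fixes n :: int and \<rho> :: "int \<Rightarrow> complex"
  assumes n_pos: "n > 0" and character: "faithful_unitary_char n \<rho>"
begin

lemma char_add_mod: "\<rho> ((a + b) mod n) = \<rho> (a mod n) * \<rho> (b mod n)"
proof -
  have "(a + b) mod n = (a mod n + b mod n) mod n" by (simp add: mod_add_eq)
  then show ?thesis
    using character n_pos by (simp add: faithful_unitary_char_def)
qed

lemma norm_char_mod: "cmod (\<rho> (a mod n)) = 1"
  using character n_pos by (simp add: faithful_unitary_char_def)

lemma char_zero: "\<rho> 0 = 1"
proof -
  have "\<rho> 0 * \<rho> 0 = \<rho> 0 * 1" using char_add_mod[of 0 0] by simp
  moreover have "\<rho> 0 \<noteq> 0" using norm_char_mod[of 0] by auto
  ultimately show ?thesis by simp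
qed

lemma char_uminus_mod: "\<rho> ((- a) mod n) = cnj (\<rho> (a mod n))"
proof -
  have "\<rho> (a mod n) * \<rho> ((- a) mod n) = 1"
    using char_add_mod[of a "- a"] char_zero by simp
  moreover have "\<rho> (a mod n) * cnj (\<rho> (a mod n)) = 1"
    using norm_char_mod[of a] by (simp flip: complex_norm_square)
  ultimately show ?thesis
    by (metis inverse_unique)
qed

lemma Re_char_uminus_mod: "Re (\<rho> ((- a) mod n)) = Re (\<rho> (a mod n))"
  by (simp add: char_uminus_mod)

lemma char_sum_mod: "finite A \<Longrightarrow> \<rho> ((\<Sum>x\<in>A. f x) mod n) = (\<Prod>x\<in>A. \<rho> (f x mod n))"
  by (induction A rule: finite_induct) (simp_all add: char_zero char_add_mod)

end

lemma norm_divide_sum_prod_le: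
  fixes u :: "'t \<Rightarrow> complex" and a :: "'t \<Rightarrow> real"
    and z :: "'t \<Rightarrow> 'e \<Rightarrow> complex" and w :: "'t \<Rightarrow> 'e \<Rightarrow> real"
  assumes "c \<ge> 0"
    and "\<And>t. t \<in> T \<Longrightarrow> cmod (u t) \<le> 1" and "\<And>t. t \<in> T \<Longrightarrow> a t \<ge> 0"
    and "\<And>t e. t \<in> T \<Longrightarrow> e \<in> S \<Longrightarrow> w t e \<ge> 0"
    and "\<And>t e. t \<in> T \<Longrightarrow> e \<in> S \<Longrightarrow> cmod (z t e) \<le> c * w t e"
  shows "cmod ((\<Sum>t\<in>T. u t * of_real (a t) * (\<Prod>e\<in>S. z t e)) /
                of_real (\<Sum>t\<in>T. a t * (\<Prod>e\<in>S. w t e))) \<le> c ^ card S"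
proof -
  define D where "D = (\<Sum>t\<in>T. a t * (\<Prod>e\<in>S. w t e))"
  have "D \<ge> 0"
    unfolding D_def using assms(3,4) by (auto intro!: sum_nonneg mult_nonneg_nonneg prod_nonneg)
  have "cmod (\<Sum>t\<in>T. u t * of_real (a t) * (\<Prod>e\<in>S. z t e))
      \<le> (\<Sum>t\<in>T. cmod (u t) * a t * (\<Prod>e\<in>S. cmod (z t e)))"
    using assms(3) by (auto intro!: order.trans[OF norm_sum] sum_mono simp: norm_mult prod_norm)
  also have "\<dots> \<le> (\<Sum>t\<in>T. 1 * a t * (\<Prod>e\<in>S. c * w t e))"
    using assms(2-5) by (intro sum_mono mult_mono prod_mono) (auto intro: prod_nonneg)
  also have "\<dots> = c ^ card S * D"
    by (simp add: D_def prod.distrib sum_distrib_left algebra_simps)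
  finally show ?thesis
    using \<open>D \<ge> 0\<close> assms(1)
    by (cases "D = 0") (auto simp: D_def[symmetric] norm_divide divide_le_eq)
qed

lemma alpha5_le:
  assumes "length gs = 6" and "set gs \<subseteq> {0..<n}"
  shows "alpha5 n \<rho> \<beta> \<kappa> \<le> 1 - cmod
      ((\<Sum>g\<in>{0..<n}. \<rho> g * of_real (alpha5_weight n \<rho> \<beta> \<kappa> gs g)) /
       of_real (\<Sum>g\<in>{0..<n}. alpha5_weight n \<rho> \<beta> \<kappa> gs g))"
  unfolding alpha5_def
proof (rule Min_le)
  show "finite ((\<lambda>gs. 1 - cmod
      ((\<Sum>g\<in>{0..<n}. \<rho> g * of_real (alpha5_weight n \<rho> \<beta> \<kappa> gs g)) /
       of_real (\<Sum>g\<in>{0..<n}. alpha5_weight n \<rho> \<beta> \<kappa> gs g)))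
      ` {gs. length gs = 6 \<and> set gs \<subseteq> {0..<n}})"
    using finite_lists_length_eq[of "{0..<n}" 6] by (simp add: conj_commute)
qed (use assms in auto)

lemma alpha5_le_one: "n > 0 \<Longrightarrow> alpha5 n \<rho> \<beta> \<kappa> \<le> 1"
  by (rule order.trans[OF alpha5_le[where gs = "replicate 6 0"]]) auto

lemma alpha5_weight_eq:
  "alpha5_weight n \<rho> \<beta> \<kappa> gs g = exp (- (12 * \<beta> + 2 * \<kappa>)) *
     exp (2 * \<beta> * (\<Sum>k<6. Re (\<rho> ((g + gs ! k) mod n))) + 2 * \<kappa> * Re (\<rho> g))"
proof -
  have "(\<Prod>k<6. (phi \<beta> \<rho> ((g + gs ! k) mod n))\<^sup>2) =
      exp (\<Sum>k<6. 2 * \<beta> * (Re (\<rho> ((g + gs ! k) mod n)) - 1))"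
    by (simp add: exp_sum phi_def power2_eq_square exp_add[symmetric] mult.assoc)
  moreover have "(phi \<kappa> \<rho> g)\<^sup>2 = exp (2 * \<kappa> * (Re (\<rho> g) - 1))"
    by (simp add: phi_def power2_eq_square exp_add[symmetric])
  ultimately show ?thesis
    by (simp add: alpha5_weight_def sum_subtractf sum_distrib_left[symmetric] exp_add[symmetric]
        algebra_simps)
qed

text \<open>In the application, \<open>gs\<close> lists the contributions of the other edges of the six
  plaquettes through a free edge of the loop.\<close>

lemma norm_char_sum_le_alpha5:
  fixes w :: "int \<Rightarrow> real"
  assumes "length gs = 6" and "set gs \<subseteq> {0..<n}"
    and w_def: "\<And>g. w g = exp (2 * \<beta> * (\<Sum>k<6. Re (\<rho> ((g + gs ! k) mod n))) + 2 * \<kappa> * Re (\<rho> g))"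
  shows "cmod (\<Sum>g\<in>{0..<n}. \<rho> g * of_real (w g)) \<le> (1 - alpha5 n \<rho> \<beta> \<kappa>) * (\<Sum>g\<in>{0..<n}. w g)"
proof -
  define K where "K = exp (- (12 * \<beta> + 2 * \<kappa>))"
  have "n > 0" using assms(1,2) by (cases gs) auto
  then have pos: "(\<Sum>g\<in>{0..<n}. w g) > 0"
    by (intro sum_pos) (auto simp: w_def)
  have "K > 0" by (simp add: K_def)
  moreover have "(\<Sum>g\<in>{0..<n}. \<rho> g * of_real (alpha5_weight n \<rho> \<beta> \<kappa> gs g)) =
      of_real K * (\<Sum>g\<in>{0..<n}. \<rho> g * of_real (w g))"
    by (simp add: alpha5_weight_eq w_def K_def sum_distrib_left algebra_simps)
  moreover have "(\<Sum>g\<in>{0..<n}. alpha5_weight n \<rho> \<beta> \<kappa> gs g) = K * (\<Sum>g\<in>{0..<n}. w g)"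
    by (simp add: alpha5_weight_eq w_def K_def sum_distrib_left)
  moreover have "cmod (\<Sum>g\<in>{0..<n}. complex_of_real (w g)) = (\<Sum>g\<in>{0..<n}. w g)"
    using pos by (simp only: of_real_sum[symmetric] norm_of_real abs_of_pos)
  ultimately have "cmod (\<Sum>g\<in>{0..<n}. \<rho> g * of_real (w g)) / (\<Sum>g\<in>{0..<n}. w g)
      \<le> 1 - alpha5 n \<rho> \<beta> \<kappa>"
    using alpha5_le[OF assms(1,2), of \<rho> \<beta> \<kappa>] by (simp add: norm_divide norm_mult)
  then show ?thesis
    using pos by (simp add: pos_divide_le_eq mult.commute)
qed

locale loop_setting = zn_character +
  fixes N :: nat and \<beta> \<kappa> :: real and \<gamma> :: "edge set"
  assumes simple: "simple_loop \<gamma>"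
    and loop_in_edges: "\<gamma> \<subseteq> edges N"
    and cobd_in_edges: "bd_set (cobd \<gamma>) \<subseteq> edges N"
begin

definition free_edges :: "edge set" where
  "free_edges = \<gamma> - gamma_c \<gamma>"

abbreviation free_values :: "(edge \<Rightarrow> int) set" where
  "free_values \<equiv> free_edges \<rightarrow>\<^sub>E {0..<n}"

definition configs0 :: "(edge \<Rightarrow> int) set" where
  "configs0 = {\<tau> \<in> configs n N. \<forall>e\<in>free_edges. \<tau> e = 0}"

definition glue :: "(edge \<Rightarrow> int) \<Rightarrow> (edge \<Rightarrow> int) \<Rightarrow> edge \<Rightarrow> int" where
  "glue \<tau> h e =
     (if e \<in> free_edges then h e
      else if rev_edge e \<in> free_edges then (- h (rev_edge e)) mod n else \<tau> e)"

lemma finite_loop: "finite \<gamma>"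
  using simple by (auto simp: simple_loop_def)

lemma finite_free_edges: "finite free_edges"
  using finite_loop by (simp add: free_edges_def)

lemma free_edges_subset: "free_edges \<subseteq> \<gamma>"
  by (auto simp: free_edges_def)

lemma free_edge_in_edges: "e \<in> free_edges \<Longrightarrow> e \<in> edges N"
  using free_edges_subset loop_in_edges by auto

lemma is_edge_free_edge: "e \<in> free_edges \<Longrightarrow> is_edge e"
  using free_edge_in_edges by (auto simp: edges_def)

lemma rev_edge_notin_loop: "e \<in> \<gamma> \<Longrightarrow> rev_edge e \<notin> \<gamma>"
  using simple by (auto simp: simple_loop_def)

lemma rev_edge_notin_free_edges: "e \<in> free_edges \<Longrightarrow> rev_edge e \<notin> free_edges"
  using rev_edge_notin_loop free_edges_subset by blast

lemma finite_plaqs_at_free_edge: "e \<in> free_edges \<Longrightarrow> finite (plaqs_at e)"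
  using finite_plaqs_at is_edge_free_edge by blast

lemma plaq_at_free_edge_other_edges:
  assumes "e \<in> free_edges" "p \<in> plaqs_at e" "e' \<in> pbd p" "e' \<noteq> e"
  shows "e' \<notin> free_edges" and "rev_edge e' \<notin> free_edges"
proof -
  have "e \<in> \<gamma>" "e \<notin> gamma_c \<gamma>"
    using assms(1) by (auto simp: free_edges_def)
  then have "e' \<notin> \<gamma> \<union> rev_edge ` \<gamma>"
    using assms(2-4) by (auto simp: gamma_c_def plaqs_at_def)
  then show "e' \<notin> free_edges" "rev_edge e' \<notin> free_edges"
    using free_edges_subset by (auto simp: rev_edge_in_image_iff)
qed

lemma plaq_at_free_edge_in_edges:
  assumes "e \<in> free_edges" "p \<in> plaqs_at e"
  shows "pbd p \<subseteq> edges N"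
proof -
  have "p \<in> cobd \<gamma>"
    using assms free_edges_subset by (auto simp: plaqs_at_def cobd_def)
  then show ?thesis
    using cobd_in_edges by (auto simp: bd_set_def)
qed

lemma glue_in_configs:
  assumes "\<tau> \<in> configs n N" "h \<in> free_values"
  shows "glue \<tau> h \<in> configs n N"
proof -
  have h: "h e \<in> {0..<n}" if "e \<in> free_edges" for e
    using assms(2) that by auto
  have \<tau>: "\<And>e. e \<in> edges N \<Longrightarrow> \<tau> e \<in> {0..<n} \<and> \<tau> (rev_edge e) = (- \<tau> e) mod n"
    "\<And>e. e \<notin> edges N \<Longrightarrow> \<tau> e = 0"
    using assms(1) by (auto simp: configs_def)
  have "glue \<tau> h (rev_edge e) = (- glue \<tau> h e) mod n" if "e \<in> edges N" for e
    using h[of e] h[of "rev_edge e"] \<tau>(1)[OF that] rev_edge_notin_free_edges[of e]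
    by (auto simp: glue_def mod_minus_eq)
  moreover have "glue \<tau> h e = 0" if "e \<notin> edges N" for e
    using that \<tau>(2) free_edge_in_edges[of e] free_edge_in_edges[of "rev_edge e"]
    by (auto simp: glue_def)
  moreover have "glue \<tau> h e \<in> {0..<n}" if "e \<in> edges N" for e
    using h[of e] h[of "rev_edge e"] \<tau>(1)[OF that] n_pos by (simp add: glue_def)
  ultimately show ?thesis
    unfolding configs_def by blast
qed

lemma free_value_mod: "h \<in> free_values \<Longrightarrow> e \<in> free_edges \<Longrightarrow> h e mod n = h e"
  using PiE_mem[of h free_edges "\<lambda>_. {0..<n}" e] by simp

lemma configs0_vanish:
  assumes "\<tau> \<in> configs0" "e \<in> free_edges \<or> rev_edge e \<in> free_edges"
  shows "\<tau> e = 0"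
proof (cases "e \<in> free_edges")
  case True
  then show ?thesis using assms(1) by (auto simp: configs0_def)
next
  case False
  then have e: "rev_edge e \<in> free_edges" using assms(2) by blast
  have "\<forall>e'\<in>edges N. \<tau> (rev_edge e') = (- \<tau> e') mod n"
    using assms(1) by (auto simp: configs0_def configs_def)
  then have "\<tau> e = (- \<tau> (rev_edge e)) mod n"
    using free_edge_in_edges[OF e] by (metis rev_edge_rev_edge)
  then show ?thesis
    using assms(1) e by (auto simp: configs0_def)
qed

lemma inj_on_glue: "inj_on (\<lambda>(\<tau>, h). glue \<tau> h) (configs0 \<times> free_values)"
proof (rule inj_onI, clarify)
  fix \<tau> h \<tau>' h'
  assume \<tau>: "\<tau> \<in> configs0" "\<tau>' \<in> configs0" and h: "h \<in> free_values" "h' \<in> free_values"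
    and eq: "glue \<tau> h = glue \<tau>' h'"
  have "h e = h' e" for e
  proof (cases "e \<in> free_edges")
    case True
    then show ?thesis using fun_cong[OF eq, of e] by (simp add: glue_def)
  next
    case False
    then show ?thesis using PiE_arb[OF h(1) False] PiE_arb[OF h(2) False] by simp
  qed
  moreover have "\<tau> e = \<tau>' e" for e
    using fun_cong[OF eq, of e] configs0_vanish[OF \<tau>(1), of e] configs0_vanish[OF \<tau>(2), of e]
    by (cases "e \<in> free_edges \<or> rev_edge e \<in> free_edges") (auto simp: glue_def)
  ultimately show "\<tau> = \<tau>' \<and> h = h'"
    by (simp add: fun_eq_iff)
qed

lemma configs_subset_glue_image:
  "configs n N \<subseteq> (\<lambda>(\<tau>, h). glue \<tau> h) ` (configs0 \<times> free_values)"
proof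
  fix \<sigma> assume \<sigma>: "\<sigma> \<in> configs n N"
  then have \<sigma>_props: "\<And>e. e \<in> edges N \<Longrightarrow> \<sigma> e \<in> {0..<n} \<and> \<sigma> (rev_edge e) = (- \<sigma> e) mod n"
    "\<And>e. e \<notin> edges N \<Longrightarrow> \<sigma> e = 0"
    unfolding configs_def by blast+
  define \<tau> where "\<tau> e = (if e \<in> free_edges \<or> rev_edge e \<in> free_edges then 0 else \<sigma> e)" for e
  have "\<tau> \<in> configs0"
    using \<sigma>_props n_pos by (auto simp: configs0_def configs_def \<tau>_def)
  moreover have "restrict \<sigma> free_edges \<in> free_values"
    using \<sigma>_props free_edge_in_edges by auto
  moreover have "glue \<tau> (restrict \<sigma> free_edges) = \<sigma>"
  proof
    fix e
    have "\<sigma> e = (- \<sigma> (rev_edge e)) mod n" if "rev_edge e \<in> free_edges"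
      using \<sigma>_props(1)[OF free_edge_in_edges[OF that]] by simp
    then show "glue \<tau> (restrict \<sigma> free_edges) e = \<sigma> e"
      by (simp add: glue_def \<tau>_def)
  qed
  ultimately show "\<sigma> \<in> (\<lambda>(\<tau>, h). glue \<tau> h) ` (configs0 \<times> free_values)"
    by (intro image_eqI[where x = "(\<tau>, restrict \<sigma> free_edges)"]) auto
qed

lemma bij_betw_glue: "bij_betw (\<lambda>(\<tau>, h). glue \<tau> h) (configs0 \<times> free_values) (configs n N)"
proof (rule bij_betw_imageI[OF inj_on_glue])
  show "(\<lambda>(\<tau>, h). glue \<tau> h) ` (configs0 \<times> free_values) = configs n N"
    using glue_in_configs configs_subset_glue_image by (auto simp: configs0_def)
qed

lemma sum_configs_factor:
  fixes F :: "(edge \<Rightarrow> int) \<Rightarrow> 'a :: comm_semiring_1"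
  assumes "\<And>\<tau> h. \<tau> \<in> configs0 \<Longrightarrow> h \<in> free_values \<Longrightarrow>
      F (glue \<tau> h) = A \<tau> * (\<Prod>e\<in>free_edges. f \<tau> e (h e))"
  shows "(\<Sum>\<sigma>\<in>configs n N. F \<sigma>) = (\<Sum>\<tau>\<in>configs0. A \<tau> * (\<Prod>e\<in>free_edges. \<Sum>g\<in>{0..<n}. f \<tau> e g))"
proof -
  have "(\<Sum>\<sigma>\<in>configs n N. F \<sigma>) = (\<Sum>(\<tau>, h)\<in>configs0 \<times> free_values. F (glue \<tau> h))"
    using sum.reindex_bij_betw[OF bij_betw_glue, of F] by (simp add: case_prod_beta')
  also have "\<dots> = (\<Sum>\<tau>\<in>configs0. \<Sum>h\<in>free_values. A \<tau> * (\<Prod>e\<in>free_edges. f \<tau> e (h e)))"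
    by (simp add: sum.cartesian_product[symmetric] assms)
  also have "\<dots> = (\<Sum>\<tau>\<in>configs0. A \<tau> * (\<Prod>e\<in>free_edges. \<Sum>g\<in>{0..<n}. f \<tau> e g))"
    by (simp add: sum_distrib_left prod_sum_PiE finite_free_edges)
  finally show ?thesis .
qed

definition plaq_rest :: "(edge \<Rightarrow> int) \<Rightarrow> edge \<Rightarrow> plaq \<Rightarrow> int" where
  "plaq_rest \<tau> e p = (\<Sum>e'\<in>pbd p - {e}. \<tau> e')"

text \<open>Each plaquette and each edge enters the action with both orientations, with equal real
  parts; this is the origin of the factors \<open>2\<close>.\<close>

definition edge_action :: "(edge \<Rightarrow> int) \<Rightarrow> edge \<Rightarrow> int \<Rightarrow> real" where
  "edge_action \<tau> e g =
     2 * \<beta> * (\<Sum>p\<in>plaqs_at e. Re (\<rho> ((g + plaq_rest \<tau> e p) mod n))) + 2 * \<kappa> * Re (\<rho> g)"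

definition free_plaqs :: "plaq set" where
  "free_plaqs = (\<Union>e\<in>free_edges. plaqs_at e \<union> plaqs_at (rev_edge e))"

definition rest_action :: "(edge \<Rightarrow> int) \<Rightarrow> real" where
  "rest_action \<tau> =
     \<beta> * (\<Sum>p\<in>plaqs N - free_plaqs. Re (\<rho> (dsig n \<tau> p))) +
     \<kappa> * (\<Sum>e\<in>edges N - (free_edges \<union> rev_edge ` free_edges). Re (\<rho> (\<tau> e)))"

lemma plaqs_at_disjoint:
  assumes "a \<in> free_edges \<or> rev_edge a \<in> free_edges" "b \<in> free_edges \<or> rev_edge b \<in> free_edges"
    and "a \<noteq> b"
  shows "plaqs_at a \<inter> plaqs_at b = {}"
proof -
  have *: "plaqs_at a \<inter> plaqs_at b = {}"
    if a: "a \<in> free_edges" and b: "b \<in> free_edges \<or> rev_edge b \<in> free_edges" "a \<noteq> b" for a b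
  proof -
    have False if "p \<in> plaqs_at a" "p \<in> plaqs_at b" for p
      using plaq_at_free_edge_other_edges[OF a that(1), of b] that(2) b by (auto simp: plaqs_at_def)
    then show ?thesis by blast
  qed
  show ?thesis
  proof (cases "a \<in> free_edges")
    case True
    then show ?thesis using * assms by blast
  next
    case False
    then have "plaqs_at (rev_edge a) \<inter> plaqs_at (rev_edge b) = {}"
      using *[of "rev_edge a" "rev_edge b"] assms by (metis rev_edge_rev_edge)
    then show ?thesis
      by (auto simp: plaqs_at_rev_edge image_iff)
  qed
qed

lemma free_plaqs_subset: "free_plaqs \<subseteq> plaqs N"
proof
  fix p assume "p \<in> free_plaqs"
  then obtain e where e: "e \<in> free_edges" and "p \<in> plaqs_at e \<union> plaq_reverse ` plaqs_at e"
    by (auto simp: free_plaqs_def plaqs_at_rev_edge)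
  then obtain q where q: "q \<in> plaqs_at e" "q = p \<or> q = plaq_reverse p"
    by (metis UnE imageE plaq_reverse_plaq_reverse)
  then have "q \<in> plaqs N"
    using plaq_at_free_edge_in_edges[OF e q(1)] by (simp add: plaqs_iff plaqs_at_def)
  then show "p \<in> plaqs N"
    using q(2) by (auto simp: plaqs_iff pbd_plaq_reverse)
qed

lemma dsig_glue_outside:
  assumes "p \<in> plaqs N - free_plaqs"
  shows "dsig n (glue \<tau> h) p = dsig n \<tau> p"
proof -
  have "glue \<tau> h e = \<tau> e" if "e \<in> pbd p" for e
  proof -
    have "p \<in> plaqs_at e" "p \<in> plaqs_at (rev_edge (rev_edge e))"
      using that assms plaqs_subset_plaquettes by (auto simp: plaqs_at_def)
    then have "e \<notin> free_edges" "rev_edge e \<notin> free_edges"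
      using assms by (auto simp: free_plaqs_def)
    then show ?thesis by (simp add: glue_def)
  qed
  then show ?thesis by (simp add: dsig_def)
qed

lemma dsig_glue_at_free_edge:
  assumes "e \<in> free_edges" "p \<in> plaqs_at e"
  shows "dsig n (glue \<tau> h) p = (h e + plaq_rest \<tau> e p) mod n"
proof -
  have "e \<in> pbd p" using assms(2) by (simp add: plaqs_at_def)
  then have "(\<Sum>e'\<in>pbd p. glue \<tau> h e') = glue \<tau> h e + (\<Sum>e'\<in>pbd p - {e}. glue \<tau> h e')"
    by (simp add: finite_pbd sum.remove)
  also have "(\<Sum>e'\<in>pbd p - {e}. glue \<tau> h e') = plaq_rest \<tau> e p"
    unfolding plaq_rest_def
    by (rule sum.cong) (use plaq_at_free_edge_other_edges[OF assms] in \<open>auto simp: glue_def\<close>)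
  finally show ?thesis
    using assms(1) by (simp add: dsig_def glue_def)
qed

lemma Re_char_dsig_plaq_reverse:
  assumes "\<sigma> \<in> configs n N" "pbd p \<subseteq> edges N"
  shows "Re (\<rho> (dsig n \<sigma> (plaq_reverse p))) = Re (\<rho> (dsig n \<sigma> p))"
proof -
  have "\<sigma> (rev_edge e) = (- \<sigma> e) mod n" if "e \<in> pbd p" for e
    using assms that by (auto simp: configs_def)
  then have "(\<Sum>e\<in>pbd (plaq_reverse p). \<sigma> e) = (\<Sum>e\<in>pbd p. (- \<sigma> e) mod n)"
    by (simp add: pbd_plaq_reverse sum.reindex inj_on_subset[OF inj_rev_edge])
  then have "dsig n \<sigma> (plaq_reverse p) = (- (\<Sum>e\<in>pbd p. \<sigma> e)) mod n"
    by (simp add: dsig_def mod_sum_eq sum_negf)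
  then show ?thesis
    by (simp add: dsig_def Re_char_uminus_mod)
qed

lemma finite_plaqs_at_rev_free_edge: "e \<in> free_edges \<Longrightarrow> finite (plaqs_at (rev_edge e))"
  by (simp add: finite_plaqs_at_free_edge plaqs_at_rev_edge)

lemma sum_free_plaqs:
  "(\<Sum>p\<in>free_plaqs. f p) = (\<Sum>e\<in>free_edges. \<Sum>p\<in>plaqs_at e \<union> plaqs_at (rev_edge e). f p)"
  unfolding free_plaqs_def
proof (rule sum.UNION_disjoint[OF finite_free_edges])
  show "\<forall>e\<in>free_edges. \<forall>e'\<in>free_edges. e \<noteq> e' \<longrightarrow>
      (plaqs_at e \<union> plaqs_at (rev_edge e)) \<inter> (plaqs_at e' \<union> plaqs_at (rev_edge e')) = {}"
  proof (intro ballI impI)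
    fix e e' assume "e \<in> free_edges" "e' \<in> free_edges" "e \<noteq> e'"
    moreover from this have "e \<noteq> rev_edge e'" "rev_edge e \<noteq> e'" "rev_edge e \<noteq> rev_edge e'"
      using rev_edge_notin_free_edges by (metis rev_edge_rev_edge)+
    ultimately show "(plaqs_at e \<union> plaqs_at (rev_edge e)) \<inter> (plaqs_at e' \<union> plaqs_at (rev_edge e')) = {}"
      using plaqs_at_disjoint[of e e'] plaqs_at_disjoint[of e "rev_edge e'"]
        plaqs_at_disjoint[of "rev_edge e" e'] plaqs_at_disjoint[of "rev_edge e" "rev_edge e'"]
      by auto
  qed
qed (auto simp: finite_plaqs_at_free_edge finite_plaqs_at_rev_free_edge)

lemma sum_plaqs_at_both_orientations:
  assumes "\<sigma> \<in> configs n N" and e: "e \<in> free_edges"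
  shows "(\<Sum>p\<in>plaqs_at e \<union> plaqs_at (rev_edge e). Re (\<rho> (dsig n \<sigma> p))) =
    2 * (\<Sum>p\<in>plaqs_at e. Re (\<rho> (dsig n \<sigma> p)))"
proof -
  let ?f = "\<lambda>p. Re (\<rho> (dsig n \<sigma> p))"
  have "plaqs_at e \<inter> plaqs_at (rev_edge e) = {}"
    using plaqs_at_disjoint e rev_edge_neq[OF is_edge_free_edge[OF e]] by simp
  then have "(\<Sum>p\<in>plaqs_at e \<union> plaqs_at (rev_edge e). ?f p) =
      (\<Sum>p\<in>plaqs_at e. ?f p) + (\<Sum>p\<in>plaqs_at e. ?f (plaq_reverse p))"
    by (simp add: sum.union_disjoint finite_plaqs_at_free_edge[OF e] finite_plaqs_at_rev_free_edge[OF e]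
        plaqs_at_rev_edge sum.reindex inj_on_subset[OF inj_plaq_reverse])
  also have "(\<Sum>p\<in>plaqs_at e. ?f (plaq_reverse p)) = (\<Sum>p\<in>plaqs_at e. ?f p)"
    using Re_char_dsig_plaq_reverse[OF assms(1)] plaq_at_free_edge_in_edges[OF e] by simp
  finally show ?thesis by simp
qed

lemma sum_plaqs_split:
  assumes "\<sigma> \<in> configs n N"
  shows "(\<Sum>p\<in>plaqs N. Re (\<rho> (dsig n \<sigma> p))) =
     (\<Sum>p\<in>plaqs N - free_plaqs. Re (\<rho> (dsig n \<sigma> p))) +
     (\<Sum>e\<in>free_edges. 2 * (\<Sum>p\<in>plaqs_at e. Re (\<rho> (dsig n \<sigma> p))))"
proof -
  have "(\<Sum>p\<in>plaqs N. Re (\<rho> (dsig n \<sigma> p))) =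
      (\<Sum>p\<in>plaqs N - free_plaqs. Re (\<rho> (dsig n \<sigma> p))) + (\<Sum>p\<in>free_plaqs. Re (\<rho> (dsig n \<sigma> p)))"
    using free_plaqs_subset finite_plaqs by (metis add.commute sum.subset_diff)
  then show ?thesis
    by (simp add: sum_free_plaqs sum_plaqs_at_both_orientations[OF assms])
qed

lemma sum_edges_split:
  "(\<Sum>e\<in>edges N. f e) =
     (\<Sum>e\<in>edges N - (free_edges \<union> rev_edge ` free_edges). f e) + (\<Sum>e\<in>free_edges. f e + f (rev_edge e))"
proof -
  have "free_edges \<union> rev_edge ` free_edges \<subseteq> edges N"
    using free_edge_in_edges by auto
  then have "(\<Sum>e\<in>edges N. f e) =
      (\<Sum>e\<in>edges N - (free_edges \<union> rev_edge ` free_edges). f e) +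
      (\<Sum>e\<in>free_edges \<union> rev_edge ` free_edges. f e)"
    using finite_edges by (metis add.commute sum.subset_diff)
  also have "(\<Sum>e\<in>free_edges \<union> rev_edge ` free_edges. f e) =
      (\<Sum>e\<in>free_edges. f e) + (\<Sum>e\<in>rev_edge ` free_edges. f e)"
    using rev_edge_notin_free_edges finite_free_edges
    by (intro sum.union_disjoint) (auto simp: rev_edge_in_image_iff)
  finally show ?thesis
    by (simp add: sum.reindex inj_on_subset[OF inj_rev_edge] sum.distrib)
qed

lemma sum_plaqs_glue:
  assumes "\<tau> \<in> configs0" and "h \<in> free_values"
  shows "(\<Sum>p\<in>plaqs N. Re (\<rho> (dsig n (glue \<tau> h) p))) =
     (\<Sum>p\<in>plaqs N - free_plaqs. Re (\<rho> (dsig n \<tau> p))) +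
     (\<Sum>e\<in>free_edges. 2 * (\<Sum>p\<in>plaqs_at e. Re (\<rho> ((h e + plaq_rest \<tau> e p) mod n))))"
proof -
  have "glue \<tau> h \<in> configs n N"
    using glue_in_configs assms by (auto simp: configs0_def)
  then show ?thesis
    by (simp add: sum_plaqs_split dsig_glue_outside dsig_glue_at_free_edge)
qed

lemma sum_edges_glue:
  assumes "h \<in> free_values"
  shows "(\<Sum>e\<in>edges N. Re (\<rho> (glue \<tau> h e))) =
    (\<Sum>e\<in>edges N - (free_edges \<union> rev_edge ` free_edges). Re (\<rho> (\<tau> e))) +
    (\<Sum>e\<in>free_edges. 2 * Re (\<rho> (h e)))"
proof -
  have "Re (\<rho> (glue \<tau> h e)) + Re (\<rho> (glue \<tau> h (rev_edge e))) = 2 * Re (\<rho> (h e))"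
    if e: "e \<in> free_edges" for e
  proof -
    have "h e mod n = h e" using free_value_mod[OF assms e] .
    then show ?thesis
      using e rev_edge_notin_free_edges[OF e] Re_char_uminus_mod[of "h e"] by (simp add: glue_def)
  qed
  moreover have "glue \<tau> h e = \<tau> e" if "e \<notin> free_edges \<union> rev_edge ` free_edges" for e
    using that by (simp add: glue_def rev_edge_in_image_iff)
  ultimately show ?thesis
    unfolding sum_edges_split[of "\<lambda>e. Re (\<rho> (glue \<tau> h e))"] by simp
qed

lemma gibbs_weight_glue:
  assumes "\<tau> \<in> configs0" and "h \<in> free_values"
  shows "gibbs_weight n \<rho> N \<beta> \<kappa> (glue \<tau> h) =
    exp (rest_action \<tau>) * (\<Prod>e\<in>free_edges. exp (edge_action \<tau> e (h e)))"
proof -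
  have "gibbs_weight n \<rho> N \<beta> \<kappa> (glue \<tau> h) =
      exp (\<beta> * (\<Sum>p\<in>plaqs N. Re (\<rho> (dsig n (glue \<tau> h) p))) +
           \<kappa> * (\<Sum>e\<in>edges N. Re (\<rho> (glue \<tau> h e))))"
    by (simp add: gibbs_weight_def)
  also have "\<dots> = exp (rest_action \<tau> + (\<Sum>e\<in>free_edges. edge_action \<tau> e (h e)))"
    unfolding sum_plaqs_glue[OF assms] sum_edges_glue[OF assms(2)] rest_action_def edge_action_def
    by (simp add: sum.distrib sum_distrib_left algebra_simps)
  finally show ?thesis
    by (simp add: exp_add exp_sum finite_free_edges)
qed

lemma wilson_loop_glue:
  assumes "h \<in> free_values"
  shows "wilson_loop n \<rho> \<gamma> (glue \<tau> h) =
    \<rho> ((\<Sum>e\<in>\<gamma> - free_edges. \<tau> e) mod n) * (\<Prod>e\<in>free_edges. \<rho> (h e))"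
proof -
  have "(\<Sum>e\<in>\<gamma>. glue \<tau> h e) = (\<Sum>e\<in>\<gamma> - free_edges. glue \<tau> h e) + (\<Sum>e\<in>free_edges. glue \<tau> h e)"
    using free_edges_subset finite_loop by (metis add.commute sum.subset_diff)
  also have "(\<Sum>e\<in>\<gamma> - free_edges. glue \<tau> h e) = (\<Sum>e\<in>\<gamma> - free_edges. \<tau> e)"
    using rev_edge_notin_loop free_edges_subset by (intro sum.cong) (auto simp: glue_def)
  also have "(\<Sum>e\<in>free_edges. glue \<tau> h e) = (\<Sum>e\<in>free_edges. h e)"
    by (simp add: glue_def)
  finally have "wilson_loop n \<rho> \<gamma> (glue \<tau> h) =
      \<rho> ((\<Sum>e\<in>\<gamma> - free_edges. \<tau> e) mod n) * (\<Prod>e\<in>free_edges. \<rho> (h e mod n))"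
    by (simp add: wilson_loop_def char_add_mod char_sum_mod finite_free_edges)
  also have "(\<Prod>e\<in>free_edges. \<rho> (h e mod n)) = (\<Prod>e\<in>free_edges. \<rho> (h e))"
    using free_value_mod[OF assms] by simp
  finally show ?thesis .
qed

lemma norm_edge_char_sum_le:
  assumes "e \<in> free_edges"
  shows "cmod (\<Sum>g\<in>{0..<n}. \<rho> g * of_real (exp (edge_action \<tau> e g)))
    \<le> (1 - alpha5 n \<rho> \<beta> \<kappa>) * (\<Sum>g\<in>{0..<n}. exp (edge_action \<tau> e g))"
proof -
  obtain ps where ps: "distinct ps" "set ps = plaqs_at e"
    using finite_distinct_list finite_plaqs_at_free_edge[OF assms] by metis
  have len: "length ps = 6"
    using distinct_card[OF ps(1)] ps(2) card_plaqs_at is_edge_free_edge[OF assms] by metis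
  define gs where "gs = map (\<lambda>p. plaq_rest \<tau> e p mod n) ps"
  have "length gs = 6" "set gs \<subseteq> {0..<n}"
    using len n_pos by (auto simp: gs_def)
  moreover have "edge_action \<tau> e g =
      2 * \<beta> * (\<Sum>k<6. Re (\<rho> ((g + gs ! k) mod n))) + 2 * \<kappa> * Re (\<rho> g)" for g
  proof -
    have "(\<Sum>p\<in>plaqs_at e. Re (\<rho> ((g + plaq_rest \<tau> e p) mod n))) =
        (\<Sum>k<length ps. Re (\<rho> ((g + plaq_rest \<tau> e (ps ! k)) mod n)))"
      using sum.reindex_bij_betw[OF bij_betw_nth[OF ps(1) refl ps(2)[symmetric]],
          of "\<lambda>p. Re (\<rho> ((g + plaq_rest \<tau> e p) mod n))"]
      by simp
    then show ?thesis
      by (simp add: edge_action_def gs_def len mod_add_right_eq)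
  qed
  ultimately show ?thesis
    using norm_char_sum_le_alpha5[where gs = gs and n = n and \<rho> = \<rho> and \<beta> = \<beta> and \<kappa> = \<kappa>
        and w = "\<lambda>g. exp (edge_action \<tau> e g)"]
    by simp
qed

end

theorem mainTheorem19:
  fixes n :: int and \<rho> :: "int \<Rightarrow> complex" and N :: nat and \<beta> \<kappa> :: real
    and \<gamma> :: "edge set"
  assumes "n > 0"
    and "faithful_unitary_char n \<rho>"
    and "\<beta> \<ge> 0" and "\<kappa> \<ge> 0"
    and "simple_loop \<gamma>"
    and "\<gamma> \<subseteq> edges N"
    and "bd_set (cobd \<gamma>) \<subseteq> edges N"
  shows "cmod (expect n \<rho> N \<beta> \<kappa> (wilson_loop n \<rho> \<gamma>))
           \<le> exp (- real (card (\<gamma> - gamma_c \<gamma>)) * alpha5 n \<rho> \<beta> \<kappa>)"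
proof -
  interpret loop_setting n \<rho> N \<beta> \<kappa> \<gamma>
    using assms by unfold_locales auto
  define W where "W \<tau> = \<rho> ((\<Sum>e\<in>\<gamma> - free_edges. \<tau> e) mod n)" for \<tau>
  have num: "(\<Sum>\<sigma>\<in>configs n N. wilson_loop n \<rho> \<gamma> \<sigma> * of_real (gibbs_weight n \<rho> N \<beta> \<kappa> \<sigma>)) =
      (\<Sum>\<tau>\<in>configs0. W \<tau> * of_real (exp (rest_action \<tau>)) *
         (\<Prod>e\<in>free_edges. \<Sum>g\<in>{0..<n}. \<rho> g * of_real (exp (edge_action \<tau> e g))))"
    by (rule sum_configs_factor)
      (simp add: wilson_loop_glue gibbs_weight_glue W_def of_real_prod prod.distrib)
  have den: "(\<Sum>\<sigma>\<in>configs n N. gibbs_weight n \<rho> N \<beta> \<kappa> \<sigma>) =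
      (\<Sum>\<tau>\<in>configs0. exp (rest_action \<tau>) * (\<Prod>e\<in>free_edges. \<Sum>g\<in>{0..<n}. exp (edge_action \<tau> e g)))"
    by (rule sum_configs_factor) (simp add: gibbs_weight_glue)
  have "cmod (expect n \<rho> N \<beta> \<kappa> (wilson_loop n \<rho> \<gamma>)) \<le> (1 - alpha5 n \<rho> \<beta> \<kappa>) ^ card free_edges"
    unfolding expect_def num den
    by (rule norm_divide_sum_prod_le)
      (auto simp: W_def norm_char_mod alpha5_le_one n_pos norm_edge_char_sum_le sum_nonneg)
  also have "\<dots> \<le> exp (- alpha5 n \<rho> \<beta> \<kappa>) ^ card free_edges"
    using alpha5_le_one[OF n_pos] exp_ge_add_one_self[of "- alpha5 n \<rho> \<beta> \<kappa>"]
    by (intro power_mono) auto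
  also have "\<dots> = exp (- real (card (\<gamma> - gamma_c \<gamma>)) * alpha5 n \<rho> \<beta> \<kappa>)"
    by (simp add: free_edges_def exp_of_nat_mult[symmetric])
  finally show ?thesis .
qed

end
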